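(* Let $k$ be an algebraically closed field of characteristic $0$ and $\alpha$ a $k$-valued pseudocharacter of $\mathrm{Cob}_2$. Then $Z_\alpha(T)$ is rational of the form $$Z_\alpha(T)=\alpha_0+mT+\sum_{i=1}^s\frac{m_iT}{1-\lambda_iT}=\mu+mT+\sum_{i=1}^s\frac{m_i\lambda_i^{-1}}{1-\lambda_iT},$$ with $m\in\{0,1,2,\dots\}$, $s\ge0$, $m_i\in\{1,2,\dots\}$, $\lambda_i\in k^\times$, and $\mu=\alpha_0-\sum_{i=1}^s m_i\lambda_i^{-1}$. Moreover $\deg_\alpha(\mathbb S^1)=m+\sum_{i=1}^s m_i$, which equals the coefficient $\alpha_1$ of $T$ in $Z_\alpha(T)$.
   Context: $\mathrm{Cob}_2$ is the rigid symmetric monoidal category of oriented two-dimensional cobordisms between closed oriented one-manifolds (finite disjoint unions of circles), with unit the empty manifold $\emptyset$. An evaluation is a monoid homomorphism $\alpha:\mathrm{End}_{\mathrm{Cob}_2}(\emptyset)\to k$ (so $\alpha(\emptyset)=1$ and $\alpha$ is multiplicative on disjoint unions); it is determined by $\alpha_g:=\alpha(S_g)$, $S_g$ the closed connected oriented surface of genus $g$, and $Z_\alpha(T)=\sum_{g\ge0}\alpha_gT^g\in k[[T]]$. Extend $\alpha$ linearly to $k$-linear combinations of closed surfaces. For an object $N$ and $n\ge1$, the antisymmetrizer is $e^-_{N,n}=\sum_{\sigma\in S_n}\mathrm{sgn}(\sigma)\sigma\in k\,\mathrm{End}(N^{\sqcup n})$, $\sigma$ acting by the permutation cobordism. For a (linear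 combination of) endomorphism(s) $f$ of an object, $\mathrm{cl}(f)$ is its closure (categorical trace: gluing outgoing boundary to incoming boundary), a (combination of) closed surface(s). The degree $\deg_\alpha(N)$ is the least integer $d\ge0$ such that $\alpha(\mathrm{cl}(h\circ e^-_{N,d+1}))=0$ for all cobordisms $h\in\mathrm{End}_{\mathrm{Cob}_2}(N^{\sqcup(d+1)})$ ($\infty$ if none). $\alpha$ is a pseudocharacter (pseudo-TQFT) of $\mathrm{Cob}_2$ if $\deg_\alpha(N)<\infty$ for every object $N$. $\mathbb S^1$ denotes the circle. *)

theory Defs
  imports "HOL-Computational_Algebra.Computational_Algebra"
          "HOL-Combinatorics.Permutations"
          "HOL-Library.Multiset"
begin

text \<open>An object is (up to isomorphism) a finite disjoint union of M circles.
  A closed surface (endomorphism of the empty manifold) is a finite multiset of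
  genera of its connected components.  An evaluation alpha is a monoid
  homomorphism from closed surfaces to k; it is the same as the sequence
  a g = alpha(S_g), and alpha(G) is the product of a over the components.\<close>

definition eval_closed :: "(nat \<Rightarrow> 'k::comm_ring_1) \<Rightarrow> nat multiset \<Rightarrow> 'k" where
  "eval_closed a G = prod_mset (image_mset a G)"

text \<open>An endomorphism h of the object consisting of M circles (a cobordism
  from M circles to M circles, up to diffeomorphism rel boundary) is encoded by
  (c, g, G): boundary circle (False, i) is the i-th incoming circle,
  (True, i) the i-th outgoing circle (i < M); c assigns to each boundary
  circle a label of the connected component containing it; g gives the genus of
  the component with a given label; G is the multiset of genera of closed
  components.  Every such triple describes a cobordism and every cobordism
  arises this way (classification of compact oriented surfaces).

  The closure of h composed with the permutation cobordism p is obtained by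
  gluing the outgoing circle j of h to the incoming circle p j of h.
  Components of the result are the connected components of the graph whose
  vertices are the component labels of h and whose edges are these gluings;
  a component with vertex set C and e edges has genus
  (sum of genera over C) + e - card C + 1.\<close>

definition glue_edges :: "nat \<Rightarrow> (bool \<times> nat \<Rightarrow> nat) \<Rightarrow> (nat \<Rightarrow> nat) \<Rightarrow> (nat \<times> nat) set" where
  "glue_edges M c p = {(c (True, j), c (False, p j)) | j. j < M}"

definition closure_twist ::
  "nat \<Rightarrow> (bool \<times> nat \<Rightarrow> nat) \<Rightarrow> (nat \<Rightarrow> nat) \<Rightarrow> nat multiset \<Rightarrow> (nat \<Rightarrow> nat) \<Rightarrow> nat multiset" where
  "closure_twist M c g G p =
     (let V = c ` ({False, True} \<times> {..<M});
          R = glue_edges M c p;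
          E = (R \<union> converse R)\<^sup>*;
          genus = (\<lambda>C. (\<Sum>v\<in>C. g v) + card {j. j < M \<and> c (True, j) \<in> C} + 1 - card C)
      in image_mset genus (mset_set (V // E)) + G)"

text \<open>The permutation cobordism of N^{\<sqcup>n} induced by sigma in S_n, where N
  consists of K circles: circle a*K + r goes to circle (sigma a)*K + r.\<close>

definition block_perm :: "nat \<Rightarrow> (nat \<Rightarrow> nat) \<Rightarrow> nat \<Rightarrow> nat" where
  "block_perm K \<sigma> j = \<sigma> (j div K) * K + j mod K"

text \<open>alpha(cl(h \<circ> e^-_{N,n})) for N = K circles and h = (c,g,G).\<close>

definition antisym_closure_value ::
  "(nat \<Rightarrow> 'k::comm_ring_1) \<Rightarrow> nat \<Rightarrow> nat \<Rightarrow> (bool \<times> nat \<Rightarrow> nat) \<Rightarrow> (nat \<Rightarrow> nat) \<Rightarrow> nat multiset \<Rightarrow> 'k" where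
  "antisym_closure_value a K n c g G =
     (\<Sum>\<sigma>\<in>{\<sigma>. \<sigma> permutes {..<n}}.
        of_int (sign \<sigma>) * eval_closed a (closure_twist (K * n) c g G (block_perm K \<sigma>)))"

definition degree_bound :: "(nat \<Rightarrow> 'k::comm_ring_1) \<Rightarrow> nat \<Rightarrow> nat \<Rightarrow> bool" where
  "degree_bound a K d \<longleftrightarrow> (\<forall>c g G. antisym_closure_value a K (Suc d) c g G = 0)"

text \<open>deg_alpha(N) for N = K circles (meaningful when some bound exists).\<close>
definition cob_degree :: "(nat \<Rightarrow> 'k::comm_ring_1) \<Rightarrow> nat \<Rightarrow> nat" where
  "cob_degree a K = (LEAST d. degree_bound a K d)"

definition pseudocharacter :: "(nat \<Rightarrow> 'k::comm_ring_1) \<Rightarrow> bool" where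
  "pseudocharacter a \<longleftrightarrow> (\<forall>K. \<exists>d. degree_bound a K d)"

definition Z_alpha :: "(nat \<Rightarrow> 'k::comm_ring_1) \<Rightarrow> 'k fps" where
  "Z_alpha a = Abs_fps a"

end

theory Submission
  imports Defs
begin

text \<open>
  Only the circle matters. Call the cylinder from a circle to itself with g handles a tube of
  genus g. Add a new tube of genus h to an endomorphism of n circles and antisymmetrize over the
  n + 1 circles: a permutation either fixes the new circle, which closes the tube into a closed
  surface of genus h + 1, or inserts it into a cycle right after some circle i, which glues the
  tube onto the component of the outgoing circle i at the cost of a sign. For n tubes of genera
  \<open>\<gamma>\<close> this gives the recursion defining \<open>tube_value\<close>, and for \<open>\<gamma> = 0\<close> the value
  \<open>\<Prod>i<n. \<alpha>\<^sub>1 - i\<close>, so the degree D of the circle is the natural number \<open>\<alpha>\<^sub>1\<close>.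

  For tubes of genus 1 the same recursion is Newton's identity between the power sums
  \<open>p\<^sub>x = \<alpha>\<^bsub>x+1\<^esub>\<close> and the elementary symmetric functions \<open>e\<^sub>n\<close> of the would-be
  eigenvalues of the handle operator, \<open>e\<^sub>n\<close> being the value of n tubes of genus 1 divided by
  n!. The vanishing of the value on D + 1 tubes makes \<open>R(T) = \<Sum>k. (-1)\<^sup>k e\<^sub>k T\<^sup>k\<close> a
  polynomial of degree at most D with \<open>S R = D R - T R'\<close>, where \<open>S(T) = \<Sum>n. p\<^sub>n T\<^sup>n\<close>.
  Factoring \<open>R = \<Prod>i<s. 1 - \<lambda>\<^sub>i T\<close> over the algebraically closed field and taking the
  logarithmic derivative gives \<open>S = (D - s) + (\<Sum>i<s. 1 / (1 - \<lambda>\<^sub>i T))\<close>, and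
  \<open>Z\<^sub>\<alpha> = \<alpha>\<^sub>0 + T S\<close>.
\<close>

section \<open>Connected components of graphs\<close>

lemma symcl_rtrancl_imp_eq_or_mem:
  assumes "R \<subseteq> V \<times> V" "(u, v) \<in> (R \<union> R\<inverse>)\<^sup>*"
  shows "u = v \<or> u \<in> V \<and> v \<in> V"
  using assms(2) by induction (use assms(1) in blast)+

lemma symcl_rtrancl_Image_subset:
  assumes "R \<subseteq> V \<times> V" "w \<in> V"
  shows "(R \<union> R\<inverse>)\<^sup>* `` {w} \<subseteq> V"
  using symcl_rtrancl_imp_eq_or_mem[OF assms(1)] assms(2) by blast

lemma quotient_eq_image: "A // r = (\<lambda>x. r `` {x}) ` A"
  unfolding quotient_def by blast

lemma symcl_rtrancl_subdivide_iff:
  assumes R: "R \<subseteq> V \<times> V" and "x \<in> V" "y \<in> V" "L \<notin> V"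
  defines "f \<equiv> \<lambda>u. if u = L then x else u"
  shows "(u, v) \<in> (insert (x, L) (insert (L, y) R) \<union> (insert (x, L) (insert (L, y) R))\<inverse>)\<^sup>*
     \<longleftrightarrow> (f u, f v) \<in> (insert (x, y) R \<union> (insert (x, y) R)\<inverse>)\<^sup>*"
    (is "_ \<in> ?E' \<longleftrightarrow> _ \<in> ?E")
proof
  assume "(u, v) \<in> ?E'"
  then show "(f u, f v) \<in> ?E"
  proof induction
    case (step w z)
    have "(f w, f z) \<in> ?E"
      using step.hyps(2) R assms(2-4) unfolding f_def by (auto intro: r_into_rtrancl)
    with step.IH show ?case by (rule rtrancl_trans)
  qed simp
next
  assume "(f u, f v) \<in> ?E"
  moreover have "?E \<subseteq> ?E'"
  proof (rule rtrancl_subset_rtrancl, safe)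
    have "(x, L) \<in> ?E'" "(L, y) \<in> ?E'" "(y, L) \<in> ?E'" "(L, x) \<in> ?E'" by auto
    then show "(x, y) \<in> ?E'" "(y, x) \<in> ?E'" by (meson rtrancl_trans)+
  qed auto
  moreover have "(u, f u) \<in> ?E'" "(f v, v) \<in> ?E'" unfolding f_def by auto
  ultimately show "(u, v) \<in> ?E'" by (meson rtrancl_trans subsetD)
qed

lemma quotient_subdivide_edge:
  assumes R: "R \<subseteq> V \<times> V" and x: "x \<in> V" and y: "y \<in> V" and L: "L \<notin> V"
  shows "insert L V // (insert (x, L) (insert (L, y) R) \<union> (insert (x, L) (insert (L, y) R))\<inverse>)\<^sup>*
     = (\<lambda>C. if x \<in> C then insert L C else C) ` (V // (insert (x, y) R \<union> (insert (x, y) R)\<inverse>)\<^sup>*)"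
    (is "_ // ?E' = ?h ` (_ // ?E)")
proof -
  define f where "f = (\<lambda>u. if u = L then x else u)"
  have rel: "(u, v) \<in> ?E' \<longleftrightarrow> (f u, f v) \<in> ?E" for u v
    unfolding f_def by (rule symcl_rtrancl_subdivide_iff[OF assms])
  have classes: "?E' `` {u} = ?h (?E `` {f u})" if "u \<in> insert L V" for u
  proof -
    have "?E `` {f u} \<subseteq> V"
      by (rule symcl_rtrancl_Image_subset) (use R x y that in \<open>auto simp: f_def\<close>)
    then show ?thesis
      using L rel[of u] unfolding f_def by (auto split: if_splits)
  qed
  have "insert L V // ?E' = (\<lambda>u. ?h (?E `` {f u})) ` insert L V"
    unfolding quotient_eq_image using classes by (rule image_cong[OF refl])
  also have "\<dots> = ?h ` (\<lambda>w. ?E `` {w}) ` f ` insert L V" by (simp only: image_image)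
  also have "f ` insert L V = V" using x L unfolding f_def by auto
  finally show ?thesis unfolding quotient_eq_image .
qed

lemma quotient_insert_loop:
  assumes R: "R \<subseteq> V \<times> V" and L: "L \<notin> V"
  shows "insert L V // (insert (L, L) R \<union> (insert (L, L) R)\<inverse>)\<^sup>* = insert {L} (V // (R \<union> R\<inverse>)\<^sup>*)"
proof -
  have "(insert (L, L) R \<union> (insert (L, L) R)\<inverse>)\<^sup>* = (R \<union> R\<inverse>)\<^sup>*"
    by (rule rtrancl_subset) auto
  moreover have "(R \<union> R\<inverse>)\<^sup>* `` {L} = {L}"
    using symcl_rtrancl_imp_eq_or_mem[OF R] L by blast
  ultimately show ?thesis unfolding quotient_eq_image by simp
qed

section \<open>Closures of endomorphisms of circles\<close>

lemma permutes_lessThan_less: "q permutes {..<n::nat} \<Longrightarrow> j < n \<Longrightarrow> q j < n"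
  using permutes_in_image by fastforce

definition boundary_labels :: "nat \<Rightarrow> (bool \<times> nat \<Rightarrow> nat) \<Rightarrow> nat set" where
  "boundary_labels M c = c ` ({False, True} \<times> {..<M})"

definition glued_components :: "nat \<Rightarrow> (bool \<times> nat \<Rightarrow> nat) \<Rightarrow> (nat \<Rightarrow> nat) \<Rightarrow> nat set set" where
  "glued_components M c p =
     boundary_labels M c // (glue_edges M c p \<union> (glue_edges M c p)\<inverse>)\<^sup>*"

definition glued_genus :: "nat \<Rightarrow> (bool \<times> nat \<Rightarrow> nat) \<Rightarrow> (nat \<Rightarrow> nat) \<Rightarrow> nat set \<Rightarrow> nat" where
  "glued_genus M c g C = (\<Sum>v\<in>C. g v) + card {j. j < M \<and> c (True, j) \<in> C} + 1 - card C"

lemma closure_twist_eq: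
  "closure_twist M c g G p = image_mset (glued_genus M c g) (mset_set (glued_components M c p)) + G"
  unfolding closure_twist_def glued_components_def boundary_labels_def glued_genus_def Let_def ..

lemma boundary_label_in: "j < M \<Longrightarrow> c (b, j) \<in> boundary_labels M c"
  unfolding boundary_labels_def by (cases b) auto

lemma boundary_label_neq: "L \<notin> boundary_labels M c \<Longrightarrow> j < M \<Longrightarrow> c (b, j) \<noteq> L"
  using boundary_label_in by metis

lemma finite_boundary_labels: "finite (boundary_labels M c)"
  unfolding boundary_labels_def by simp

lemma finite_glued_components: "finite (glued_components M c p)"
  unfolding glued_components_def quotient_eq_image using finite_boundary_labels by simp

lemma boundary_labels_Suc:
  "boundary_labels (Suc n) c = insert (c (False, n)) (insert (c (True, n)) (boundary_labels n c))"
  unfolding boundary_labels_def lessThan_Suc by auto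

lemma glue_edges_eq_image: "glue_edges M c p = (\<lambda>j. (c (True, j), c (False, p j))) ` {..<M}"
  unfolding glue_edges_def by auto

lemma glue_edges_subset:
  assumes "p permutes {..<M}"
  shows "glue_edges M c p \<subseteq> boundary_labels M c \<times> boundary_labels M c"
  unfolding glue_edges_def boundary_labels_def using permutes_lessThan_less[OF assms] by auto

lemma glued_component_subset:
  assumes "p permutes {..<M}" and "C \<in> glued_components M c p"
  shows "C \<subseteq> boundary_labels M c"
proof -
  from assms(2) obtain w where "w \<in> boundary_labels M c"
    and "C = (glue_edges M c p \<union> (glue_edges M c p)\<inverse>)\<^sup>* `` {w}"
    unfolding glued_components_def by (auto elim: quotientE)
  with symcl_rtrancl_Image_subset[OF glue_edges_subset[OF assms(1)]] show ?thesis by blast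
qed

lemma glued_genus_Suc_notin:
  assumes "c (True, n) \<notin> C"
  shows "glued_genus (Suc n) c g C = glued_genus n c g C"
  using assms less_Suc_eq unfolding glued_genus_def by metis

lemma closure_twist_Suc_loop:
  assumes cF: "c (False, n) = L" and cT: "c (True, n) = L" and L: "L \<notin> boundary_labels n c"
    and q: "q permutes {..<n}"
  shows "closure_twist (Suc n) c g G q = add_mset (g L + 1) (closure_twist n c g G q)"
proof -
  have "q n = n" using q by (simp add: permutes_def)
  moreover have "glue_edges (Suc n) c q = insert (c (True, n), c (False, q n)) (glue_edges n c q)"
    unfolding glue_edges_def using less_Suc_eq by auto
  ultimately have "glue_edges (Suc n) c q = insert (L, L) (glue_edges n c q)"
    using cF cT by simp
  moreover have "boundary_labels (Suc n) c = insert L (boundary_labels n c)"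
    using boundary_labels_Suc cF cT by simp
  ultimately have comps: "glued_components (Suc n) c q = insert {L} (glued_components n c q)"
    unfolding glued_components_def using quotient_insert_loop[OF glue_edges_subset[OF q] L]
    by simp
  have "{L} \<notin> glued_components n c q"
    using glued_component_subset[OF q] L by blast
  moreover have "glued_genus (Suc n) c g {L} = g L + 1"
  proof -
    have "{j. j < Suc n \<and> c (True, j) \<in> {L}} = {n}"
      using boundary_label_neq[OF L] cT less_Suc_eq by auto
    then show ?thesis unfolding glued_genus_def by simp
  qed
  moreover have "image_mset (glued_genus (Suc n) c g) (mset_set (glued_components n c q))
      = image_mset (glued_genus n c g) (mset_set (glued_components n c q))"
    using glued_genus_Suc_notin glued_component_subset[OF q] L cT finite_glued_components
    by (intro image_mset_cong) (metis elem_mset_set subsetD)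
  ultimately show ?thesis
    unfolding closure_twist_eq comps using finite_glued_components by simp
qed

lemma glued_genus_Suc_absorb:
  assumes cT: "c (True, n) = L" and L: "L \<notin> boundary_labels n c"
    and C: "C \<subseteq> boundary_labels n c"
  shows "glued_genus (Suc n) c g (if x \<in> C then insert L C else C)
       = glued_genus n c (g(x := g x + g L)) C"
proof (cases "x \<in> C")
  case True
  have fin: "finite C" using C finite_boundary_labels by (rule finite_subset)
  have LC: "L \<notin> C" using C L by blast
  have "(\<Sum>v\<in>C. (g(x := g x + g L)) v) = g L + (\<Sum>v\<in>C. g v)"
    using fin True by (simp add: sum.remove)
  moreover have "{j. j < Suc n \<and> c (True, j) \<in> insert L C} = insert n {j. j < n \<and> c (True, j) \<in> C}"
    using boundary_label_neq[OF L] cT less_Suc_eq by auto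
  ultimately show ?thesis
    unfolding glued_genus_def using True fin LC by simp
next
  case False
  then have "(\<Sum>v\<in>C. (g(x := g x + g L)) v) = (\<Sum>v\<in>C. g v)"
    by (intro sum.cong) auto
  moreover have "c (True, n) \<notin> C" using C L cT by blast
  ultimately show ?thesis
    using False glued_genus_Suc_notin unfolding glued_genus_def by simp
qed

lemma glued_components_Suc_transpose:
  assumes cF: "c (False, n) = L" and cT: "c (True, n) = L" and L: "L \<notin> boundary_labels n c"
    and q: "q permutes {..<n}" and i: "i < n"
  shows "glued_components (Suc n) c (transpose n (q i) \<circ> q)
       = (\<lambda>C. if c (True, i) \<in> C then insert L C else C) ` glued_components n c q"
proof -
  define \<sigma> where "\<sigma> = transpose n (q i) \<circ> q"
  define R where "R = {(c (True, j), c (False, q j)) | j. j < n \<and> j \<noteq> i}"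
  have "q n = n" using q by (simp add: permutes_def)
  moreover have "q j \<noteq> q i" if "j \<noteq> i" for j using q that by (metis permutes_inj inj_eq)
  ultimately have \<sigma>: "\<sigma> i = n" "\<sigma> n = q i" "\<And>j. j < n \<Longrightarrow> j \<noteq> i \<Longrightarrow> \<sigma> j = q j"
    using permutes_lessThan_less[OF q] unfolding \<sigma>_def by (auto simp: transpose_def)
  have old: "glue_edges n c q = insert (c (True, i), c (False, q i)) R"
    unfolding glue_edges_def R_def using i by auto
  have "glue_edges (Suc n) c \<sigma> = insert (c (True, i), c (False, \<sigma> i))
          (insert (c (True, n), c (False, \<sigma> n)) {(c (True, j), c (False, \<sigma> j)) | j. j < n \<and> j \<noteq> i})"
    unfolding glue_edges_def using i less_Suc_eq by auto
  also have "{(c (True, j), c (False, \<sigma> j)) | j. j < n \<and> j \<noteq> i} = R"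
    unfolding R_def using \<sigma>(3) by metis
  finally have new:
    "glue_edges (Suc n) c \<sigma> = insert (c (True, i), L) (insert (L, c (False, q i)) R)"
    unfolding \<sigma>(1,2) cF cT .
  have "R \<subseteq> boundary_labels n c \<times> boundary_labels n c"
    and "c (True, i) \<in> boundary_labels n c" "c (False, q i) \<in> boundary_labels n c"
    using glue_edges_subset[OF q, of c] unfolding old by auto
  from quotient_subdivide_edge[OF this L]
  have "glued_components (Suc n) c \<sigma>
      = (\<lambda>C. if c (True, i) \<in> C then insert L C else C) ` glued_components n c q"
    unfolding glued_components_def old new boundary_labels_Suc cF cT by simp
  then show ?thesis unfolding \<sigma>_def .
qed

lemma closure_twist_Suc_transpose:
  assumes cF: "c (False, n) = L" and cT: "c (True, n) = L" and L: "L \<notin> boundary_labels n c"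
    and q: "q permutes {..<n}" and i: "i < n"
  shows "closure_twist (Suc n) c g G (transpose n (q i) \<circ> q)
       = closure_twist n c (g(c (True, i) := g (c (True, i)) + g L)) G q"
proof -
  define h where "h = (\<lambda>C. if c (True, i) \<in> C then insert L C else C)"
  have L_notin: "L \<notin> C" if "C \<in> glued_components n c q" for C
    using glued_component_subset[OF q that] L by blast
  then have "inj_on h (glued_components n c q)"
    unfolding h_def by (intro inj_onI) (metis insert_Diff1 singletonI Diff_insert_absorb)
  then have "image_mset (glued_genus (Suc n) c g)
        (mset_set (glued_components (Suc n) c (transpose n (q i) \<circ> q)))
      = image_mset (glued_genus (Suc n) c g \<circ> h) (mset_set (glued_components n c q))"
    unfolding glued_components_Suc_transpose[OF assms] h_def[symmetric]
    by (simp add: image_mset_mset_set[symmetric] multiset.map_comp)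
  also have "\<dots> = image_mset (glued_genus n c (g(c (True, i) := g (c (True, i)) + g L)))
      (mset_set (glued_components n c q))"
    using glued_genus_Suc_absorb[OF cT L glued_component_subset[OF q]] finite_glued_components
    unfolding h_def by (intro image_mset_cong) auto
  finally show ?thesis unfolding closure_twist_eq by simp
qed

lemma closure_twist_cong:
  assumes c: "\<And>b j. j < n \<Longrightarrow> c (b, j) = c' (b, j)"
    and g: "\<And>v. v \<in> boundary_labels n c \<Longrightarrow> g v = g' v"
    and \<sigma>: "\<sigma> permutes {..<n}"
  shows "closure_twist n c g G \<sigma> = closure_twist n c' g' G \<sigma>"
proof -
  have labels: "boundary_labels n c = boundary_labels n c'"
    unfolding boundary_labels_def using c by (intro image_cong) auto
  have "glue_edges n c \<sigma> = glue_edges n c' \<sigma>"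
    unfolding glue_edges_eq_image using c permutes_lessThan_less[OF \<sigma>] by (intro image_cong) auto
  then have comps: "glued_components n c \<sigma> = glued_components n c' \<sigma>"
    unfolding glued_components_def labels by simp
  have "glued_genus n c g C = glued_genus n c' g' C" if "C \<in> glued_components n c \<sigma>" for C
  proof -
    have "(\<Sum>v\<in>C. g v) = (\<Sum>v\<in>C. g' v)"
      using glued_component_subset[OF \<sigma> that] g by (intro sum.cong) auto
    moreover have "{j. j < n \<and> c (True, j) \<in> C} = {j. j < n \<and> c' (True, j) \<in> C}"
      using c by auto
    ultimately show ?thesis unfolding glued_genus_def by simp
  qed
  then show ?thesis
    unfolding closure_twist_eq comps[symmetric] using finite_glued_components
    by (intro arg_cong2[where f = "(+)"] image_mset_cong) auto
qed

lemma closure_twist_conj: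
  assumes \<pi>: "\<pi> permutes {..<n}"
  shows "closure_twist n (\<lambda>(b, j). c (b, \<pi> j)) g G \<sigma> = closure_twist n c g G (\<pi> \<circ> \<sigma> \<circ> inv \<pi>)"
proof -
  define c' where "c' = (\<lambda>(b, j). c (b, \<pi> j))"
  have \<pi>_image: "\<pi> ` {..<n} = {..<n}" using permutes_image[OF \<pi>] .
  have c'_comp: "c' = c \<circ> map_prod (\<lambda>b. b) \<pi>" unfolding c'_def by auto
  have labels: "boundary_labels n c' = boundary_labels n c"
    unfolding boundary_labels_def image_comp[symmetric] c'_comp
    unfolding map_prod_surj_on[OF image_ident \<pi>_image] ..
  have "glue_edges n c (\<pi> \<circ> \<sigma> \<circ> inv \<pi>)
      = (\<lambda>k. (c (True, k), c (False, \<pi> (\<sigma> (inv \<pi> k))))) ` \<pi> ` {..<n}"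
    unfolding glue_edges_eq_image \<pi>_image by simp
  also have "\<dots> = glue_edges n c' \<sigma>"
    unfolding glue_edges_eq_image image_comp c'_def using permutes_inverses(2)[OF \<pi>]
    by (simp add: o_def)
  finally have comps: "glued_components n c' \<sigma> = glued_components n c (\<pi> \<circ> \<sigma> \<circ> inv \<pi>)"
    unfolding glued_components_def labels by simp
  have "glued_genus n c' g C = glued_genus n c g C" for C
  proof -
    have "{k. k < n \<and> c (True, k) \<in> C} = \<pi> ` {j. j < n \<and> c' (True, j) \<in> C}"
      using permutes_lessThan_less[OF \<pi>] permutes_lessThan_less[OF permutes_inv[OF \<pi>]]
        permutes_inverses(1)[OF \<pi>] unfolding c'_def by (auto simp: image_iff) metis
    moreover have "inj_on \<pi> {j. j < n \<and> c' (True, j) \<in> C}"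
      using permutes_inj[OF \<pi>] by (rule inj_on_subset) simp
    ultimately show ?thesis unfolding glued_genus_def by (simp add: card_image)
  qed
  then show ?thesis unfolding closure_twist_eq comps c'_def[symmetric] by presburger
qed

section \<open>Antisymmetrized closures of tubes\<close>

lemma sum_permutations_Suc:
  "(\<Sum>\<sigma>\<in>{\<sigma>. \<sigma> permutes {..<Suc n}}. f \<sigma>)
     = (\<Sum>q\<in>{q. q permutes {..<n}}. f q + (\<Sum>i<n. f (transpose n (q i) \<circ> q)))"
proof -
  have "(\<Sum>\<sigma>\<in>{\<sigma>. \<sigma> permutes {..<Suc n}}. f \<sigma>)
      = (\<Sum>b\<in>insert n {..<n}. \<Sum>q\<in>{q. q permutes {..<n}}. f (transpose n b \<circ> q))"
    unfolding lessThan_Suc by (rule sum_over_permutations_insert) auto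
  also have "\<dots> = (\<Sum>q\<in>{q. q permutes {..<n}}. f q + (\<Sum>b<n. f (transpose n b \<circ> q)))"
    by (simp add: sum.distrib sum.swap[of _ "{..<n}"])
  also have "\<dots> = (\<Sum>q\<in>{q. q permutes {..<n}}. f q + (\<Sum>i<n. f (transpose n (q i) \<circ> q)))"
  proof (rule sum.cong[OF refl])
    fix q assume "q \<in> {q. q permutes {..<n}}"
    then have q: "q permutes {..<n}" by simp
    have "(\<Sum>b<n. f (transpose n b \<circ> q)) = (\<Sum>i<n. f (transpose n (q i) \<circ> q))"
      using sum.reindex[OF permutes_inj_on[OF q, of "{..<n}"], of "\<lambda>b. f (transpose n b \<circ> q)"]
      unfolding permutes_image[OF q] by (simp add: o_def)
    then show "f q + (\<Sum>b<n. f (transpose n b \<circ> q)) = f q + (\<Sum>i<n. f (transpose n (q i) \<circ> q))"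
      by simp
  qed
  finally show ?thesis .
qed

lemma antisym_closure_value_circles:
  "antisym_closure_value a 1 n c g G =
     (\<Sum>\<sigma>\<in>{\<sigma>. \<sigma> permutes {..<n}}. of_int (sign \<sigma>) * eval_closed a (closure_twist n c g G \<sigma>))"
proof -
  have "block_perm 1 \<sigma> = \<sigma>" for \<sigma> unfolding block_perm_def by auto
  then show ?thesis unfolding antisym_closure_value_def by simp
qed

lemma antisym_closure_value_Suc_tube:
  assumes cF: "c (False, n) = L" and cT: "c (True, n) = L" and L: "L \<notin> boundary_labels n c"
  shows "antisym_closure_value a 1 (Suc n) c g G =
     a (g L + 1) * antisym_closure_value a 1 n c g G
     - (\<Sum>i<n. antisym_closure_value a 1 n c (g(c (True, i) := g (c (True, i)) + g L)) G)"
proof -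
  have loop: "of_int (sign q) * eval_closed a (closure_twist (Suc n) c g G q)
      = a (g L + 1) * (of_int (sign q) * eval_closed a (closure_twist n c g G q))"
    if q: "q permutes {..<n}" for q
    by (simp add: closure_twist_Suc_loop[OF cF cT L q] eval_closed_def)
  have transp: "of_int (sign (transpose n (q i) \<circ> q))
        * eval_closed a (closure_twist (Suc n) c g G (transpose n (q i) \<circ> q))
      = - (of_int (sign q)
        * eval_closed a (closure_twist n c (g(c (True, i) := g (c (True, i)) + g L)) G q))"
    if q: "q permutes {..<n}" and i: "i < n" for q i
  proof -
    have "q i \<noteq> n" using permutes_lessThan_less[OF q i] by simp
    then have "sign (transpose n (q i) \<circ> q) = - sign q"
      using permutes_imp_permutation[OF finite_lessThan q]
      by (simp add: sign_compose permutation_swap_id sign_swap_id)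
    then show ?thesis by (simp add: closure_twist_Suc_transpose[OF cF cT L q i])
  qed
  show ?thesis
    unfolding antisym_closure_value_circles sum_permutations_Suc
    by (simp add: loop transp sum_subtractf sum_distrib_left sum_negf sum.swap[of _ "{..<n}"])
qed

lemma antisym_closure_value_cong:
  assumes "\<And>b j. j < n \<Longrightarrow> c (b, j) = c' (b, j)" and "\<And>v. v \<in> boundary_labels n c \<Longrightarrow> g v = g' v"
  shows "antisym_closure_value a 1 n c g G = antisym_closure_value a 1 n c' g' G"
  unfolding antisym_closure_value_circles
  by (intro sum.cong refl) (metis closure_twist_cong assms mem_Collect_eq)

lemma antisym_closure_value_conj:
  assumes \<pi>: "\<pi> permutes {..<n}"
  shows "antisym_closure_value a 1 n (\<lambda>(b, j). c (b, \<pi> j)) g G = antisym_closure_value a 1 n c g G"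
proof -
  define F where "F \<sigma> = of_int (sign \<sigma>) * eval_closed a (closure_twist n c g G \<sigma>)" for \<sigma>
  have "sign (\<pi> \<circ> \<sigma> \<circ> inv \<pi>) = sign \<sigma>" if "\<sigma> permutes {..<n}" for \<sigma>
    using permutes_imp_permutation[OF finite_lessThan] \<pi> permutes_inv[OF \<pi>] that
    by (simp add: sign_compose permutation_compose sign_inverse)
  then have "antisym_closure_value a 1 n (\<lambda>(b, j). c (b, \<pi> j)) g G
      = (\<Sum>\<sigma>\<in>{\<sigma>. \<sigma> permutes {..<n}}. F (\<pi> \<circ> \<sigma> \<circ> inv \<pi>))"
    unfolding antisym_closure_value_circles closure_twist_conj[OF \<pi>] F_def by simp
  also have "\<dots> = (\<Sum>\<sigma>\<in>{\<sigma>. \<sigma> permutes {..<n}}. F \<sigma>)"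
    using setum_permutations_compose_left[OF \<pi>, of F]
      sum_permutations_compose_right[OF permutes_inv[OF \<pi>], of "\<lambda>\<sigma>. F (\<pi> \<circ> \<sigma>)"]
    by (simp add: o_assoc)
  finally show ?thesis unfolding antisym_closure_value_circles F_def .
qed

fun tube_value :: "(nat \<Rightarrow> 'k::comm_ring_1) \<Rightarrow> nat \<Rightarrow> (nat \<Rightarrow> nat) \<Rightarrow> 'k" where
  "tube_value a 0 \<gamma> = 1"
| "tube_value a (Suc n) \<gamma> =
     a (\<gamma> n + 1) * tube_value a n \<gamma> - (\<Sum>i<n. tube_value a n (\<gamma>(i := \<gamma> i + \<gamma> n)))"

lemma tube_value_cong: "(\<And>j. j < n \<Longrightarrow> \<gamma> j = \<gamma>' j) \<Longrightarrow> tube_value a n \<gamma> = tube_value a n \<gamma>'"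
proof (induction n arbitrary: \<gamma> \<gamma>')
  case (Suc n)
  have "tube_value a n \<gamma> = tube_value a n \<gamma>'"
    by (rule Suc.IH) (use Suc.prems in auto)
  moreover have "tube_value a n (\<gamma>(i := \<gamma> i + \<gamma> n)) = tube_value a n (\<gamma>'(i := \<gamma>' i + \<gamma>' n))" for i
    by (rule Suc.IH) (use Suc.prems in auto)
  moreover have "\<gamma> n = \<gamma>' n" using Suc.prems by simp
  ultimately show ?case by simp
qed simp

lemma antisym_closure_value_tubes:
  assumes "inj_on l {..<n}"
  shows "antisym_closure_value a 1 n (\<lambda>(b, j). l j) g {#} = tube_value a n (g \<circ> l)"
  using assms
proof (induction n arbitrary: g)
  case 0
  have "{\<sigma>. \<sigma> permutes {..<0::nat}} = {id}" by (auto simp: permutes_empty)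
  moreover have "closure_twist 0 c g {#} id = {#}" for c :: "bool \<times> nat \<Rightarrow> nat"
    unfolding closure_twist_eq glued_components_def boundary_labels_def by simp
  ultimately show ?case unfolding antisym_closure_value_circles by (simp add: eval_closed_def)
next
  case (Suc n)
  have inj: "inj_on l {..<n}" using Suc.prems by (rule inj_on_subset) auto
  have L: "l n \<notin> boundary_labels n (\<lambda>(b, j). l j)"
    using Suc.prems unfolding boundary_labels_def inj_on_def by fastforce
  have absorb: "tube_value a n (g(l i := g (l i) + g (l n)) \<circ> l)
      = tube_value a n ((g \<circ> l)(i := (g \<circ> l) i + (g \<circ> l) n))" if "i < n" for i
    by (rule tube_value_cong) (use Suc.prems that in \<open>auto simp: inj_on_def\<close>)
  have "antisym_closure_value a 1 (Suc n) (\<lambda>(b, j). l j) g {#}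
      = a (g (l n) + 1) * antisym_closure_value a 1 n (\<lambda>(b, j). l j) g {#}
        - (\<Sum>i<n. antisym_closure_value a 1 n (\<lambda>(b, j). l j) (g(l i := g (l i) + g (l n))) {#})"
    using antisym_closure_value_Suc_tube[of "\<lambda>(b, j). l j", OF _ _ L] by simp
  also have "\<dots> = tube_value a (Suc n) (g \<circ> l)"
    using absorb unfolding Suc.IH[OF inj] by simp
  finally show ?case .
qed

lemma tube_value_permute:
  assumes \<pi>: "\<pi> permutes {..<n}"
  shows "tube_value a n (\<gamma> \<circ> \<pi>) = tube_value a n \<gamma>"
proof -
  have "tube_value a n (\<gamma> \<circ> \<pi>) = antisym_closure_value a 1 n (\<lambda>(b, j). \<pi> j) \<gamma> {#}"
    by (rule antisym_closure_value_tubes[OF permutes_inj_on[OF \<pi>], symmetric])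
  also have "\<dots> = antisym_closure_value a 1 n (\<lambda>(b, j). j) \<gamma> {#}"
    using antisym_closure_value_conj[OF \<pi>, of a "\<lambda>(b, j). j"] by simp
  also have "\<dots> = tube_value a n \<gamma>"
    using antisym_closure_value_tubes[of id n a \<gamma>] by simp
  finally show ?thesis .
qed

lemma tube_value_zero_genera: "tube_value a n (\<lambda>_. 0) = (\<Prod>i<n. a 1 - of_nat i)"
proof (induction n)
  case (Suc n)
  have "tube_value a n ((\<lambda>_. 0)(i := 0)) = tube_value a n (\<lambda>_. 0)" for i
    by (rule tube_value_cong) simp
  with Suc show ?case by (simp add: algebra_simps)
qed simp

lemma degree_bound_imp_tube_value_eq_0:
  assumes "degree_bound a 1 d"
  shows "tube_value a (Suc d) \<gamma> = 0"
  using assms antisym_closure_value_tubes[of id "Suc d" a \<gamma>] unfolding degree_bound_def by simp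

lemma degree_bound_circleE:
  fixes a :: "nat \<Rightarrow> 'k::idom"
  assumes "degree_bound a 1 d"
  obtains D where "D \<le> d" "a 1 = of_nat D"
proof -
  have "(\<Prod>i<Suc d. a 1 - of_nat i) = 0"
    using degree_bound_imp_tube_value_eq_0[OF assms, of "\<lambda>_. 0"] unfolding tube_value_zero_genera .
  then obtain D where "D < Suc d" "a 1 - of_nat D = 0"
    by (metis prod_zero_iff finite_lessThan lessThan_iff)
  with that show ?thesis by (metis eq_iff_diff_eq_0 less_Suc_eq_le)
qed

lemma degree_bound_circle_pred:
  fixes a :: "nat \<Rightarrow> 'k::idom"
  assumes bound: "degree_bound a 1 (Suc d)" and "a 1 \<noteq> of_nat (Suc d)"
  shows "degree_bound a 1 d"
  unfolding degree_bound_def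
proof (intro allI)
  fix c g G
  define n where "n = Suc d"
  obtain L where L: "L \<notin> boundary_labels n c"
    using ex_new_if_finite[OF infinite_UNIV_nat finite_boundary_labels] by blast
  define c' where "c' = c((False, n) := L, (True, n) := L)"
  have c': "\<And>b j. j < n \<Longrightarrow> c' (b, j) = c (b, j)" unfolding c'_def by auto
  have L': "L \<notin> boundary_labels n c'"
    using L c' unfolding boundary_labels_def by (auto simp: image_iff)
  have same: "antisym_closure_value a 1 n c' (g(L := 0)) G = antisym_closure_value a 1 n c g G"
    by (rule antisym_closure_value_cong) (use c' L' in auto)
  txt \<open>A fresh tube of genus 0 multiplies the value by \<open>a 1 - n\<close>.\<close>
  have "0 = antisym_closure_value a 1 (Suc n) c' (g(L := 0)) G"
    using bound unfolding degree_bound_def n_def by simp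
  also have "\<dots> = a 1 * antisym_closure_value a 1 n c' (g(L := 0)) G
      - (\<Sum>i<n. antisym_closure_value a 1 n c' (g(L := 0)) G)"
  proof -
    have "c' (False, n) = L" "c' (True, n) = L" unfolding c'_def by simp_all
    note step = antisym_closure_value_Suc_tube[OF this L', of a "g(L := 0)" G]
    have "(g(L := 0))(x := (g(L := 0)) x + (g(L := 0)) L) = g(L := 0)" for x by auto
    then show ?thesis using step by simp
  qed
  also have "\<dots> = (a 1 - of_nat n) * antisym_closure_value a 1 n c g G"
    unfolding same by (simp add: algebra_simps)
  finally show "antisym_closure_value a 1 (Suc d) c g G = 0"
    using assms(2) unfolding n_def by simp
qed

lemma cob_degree_circle:
  fixes a :: "nat \<Rightarrow> 'k::field_char_0"
  assumes "pseudocharacter a"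
  shows "a 1 = of_nat (cob_degree a 1)" "degree_bound a 1 (cob_degree a 1)"
proof -
  obtain d where d: "degree_bound a 1 d" using assms unfolding pseudocharacter_def by blast
  then obtain D where "D \<le> d" and D: "a 1 = of_nat D" by (rule degree_bound_circleE)
  have "degree_bound a 1 D" using d \<open>D \<le> d\<close>
  proof (induction d)
    case (Suc d)
    then show ?case using D degree_bound_circle_pred[of a d] by (metis le_Suc_eq of_nat_eq_iff)
  qed simp
  moreover have "D \<le> d'" if "degree_bound a 1 d'" for d'
    using degree_bound_circleE[OF that] D by (metis of_nat_eq_iff)
  ultimately have "cob_degree a 1 = D"
    unfolding cob_degree_def by (intro Least_equality)
  with D \<open>degree_bound a 1 D\<close>
  show "a 1 = of_nat (cob_degree a 1)" "degree_bound a 1 (cob_degree a 1)"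
    by simp_all
qed

lemma tube_value_Suc_Suc_ones:
  "tube_value a (Suc (Suc n)) (\<lambda>j. if j < Suc n then 1 else x)
     = a (x + 1) * tube_value a (Suc n) (\<lambda>_. 1)
       - of_nat (Suc n) * tube_value a (Suc n) (\<lambda>j. if j < n then 1 else x + 1)"
proof -
  define \<gamma> where "\<gamma> = (\<lambda>j. if j < Suc n then 1 else x)"
  have absorbed: "tube_value a (Suc n) (\<gamma>(i := \<gamma> i + \<gamma> (Suc n)))
      = tube_value a (Suc n) (\<lambda>j. if j < n then 1 else x + 1)" if i: "i < Suc n" for i
  proof -
    have \<pi>: "transpose i n permutes {..<Suc n}" by (rule permutes_swap_id) (use i in auto)
    have "tube_value a (Suc n) (\<gamma>(i := \<gamma> i + \<gamma> (Suc n)))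
        = tube_value a (Suc n) (\<gamma>(i := \<gamma> i + \<gamma> (Suc n)) \<circ> transpose i n)"
      by (rule tube_value_permute[OF \<pi>, symmetric])
    also have "\<dots> = tube_value a (Suc n) (\<lambda>j. if j < n then 1 else x + 1)"
      by (rule tube_value_cong) (use i in \<open>auto simp: \<gamma>_def transpose_def\<close>)
    finally show ?thesis .
  qed
  have ones: "tube_value a (Suc n) \<gamma> = tube_value a (Suc n) (\<lambda>_. 1)"
    by (rule tube_value_cong) (simp add: \<gamma>_def)
  have "\<gamma> (Suc n) = x" by (simp add: \<gamma>_def)
  then show ?thesis
    unfolding \<gamma>_def[symmetric] tube_value.simps(2)[of a "Suc n"] ones using absorbed by simp
qed

section \<open>Newton's identities\<close>

definition elem_sym :: "(nat \<Rightarrow> 'k::field_char_0) \<Rightarrow> nat \<Rightarrow> 'k" where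
  "elem_sym a n = tube_value a n (\<lambda>_. 1) / fact n"

definition newton_sum :: "(nat \<Rightarrow> 'k::field_char_0) \<Rightarrow> nat \<Rightarrow> nat \<Rightarrow> 'k" where
  "newton_sum a n x = tube_value a (Suc n) (\<lambda>j. if j < n then 1 else x) / fact n"

lemma elem_sym_0 [simp]: "elem_sym a 0 = 1"
  unfolding elem_sym_def by simp

lemma newton_sum_0: "newton_sum a 0 x = a (x + 1)"
  unfolding newton_sum_def by simp

lemma elem_sym_Suc: "of_nat (Suc n) * elem_sym a (Suc n) = newton_sum a n 1"
proof -
  have "tube_value a (Suc n) (\<lambda>_. 1) = tube_value a (Suc n) (\<lambda>j. if j < n then 1 else 1)"
    by (rule tube_value_cong) simp
  then show ?thesis unfolding elem_sym_def newton_sum_def by (simp del: of_nat_Suc tube_value.simps)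
qed

lemma newton_sum_Suc:
  "newton_sum a (Suc n) x = a (x + 1) * elem_sym a (Suc n) - newton_sum a n (x + 1)"
  unfolding newton_sum_def elem_sym_def tube_value_Suc_Suc_ones
  by (simp add: diff_divide_distrib del: of_nat_Suc tube_value.simps)

lemma newton_sum_eq:
  "(-1) ^ n * newton_sum a n x = (\<Sum>i\<le>n. (-1) ^ i * elem_sym a i * a (x + n - i + 1))"
proof (induction n arbitrary: x)
  case 0
  then show ?case by (simp add: newton_sum_0)
next
  case (Suc n)
  have "(\<Sum>i\<le>Suc n. (-1) ^ i * elem_sym a i * a (x + Suc n - i + 1))
      = (\<Sum>i\<le>n. (-1) ^ i * elem_sym a i * a ((x + 1) + n - i + 1))
        + (-1) ^ Suc n * elem_sym a (Suc n) * a (x + 1)"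
    by (simp add: Suc_diff_le)
  also have "\<dots> = (-1) ^ Suc n * newton_sum a (Suc n) x"
    unfolding Suc.IH[symmetric] newton_sum_Suc by (simp add: algebra_simps)
  finally show ?case ..
qed

lemma newton_sum_at_0:
  assumes "a 1 = of_nat D"
  shows "newton_sum a n 0 = (of_nat D - of_nat n) * elem_sym a n"
proof (cases n)
  case 0
  then show ?thesis using assms by (simp add: newton_sum_0)
next
  case (Suc m)
  then show ?thesis
    using elem_sym_Suc[of m a] assms by (simp add: newton_sum_Suc algebra_simps)
qed

lemma degree_bound_imp_newton_sum_eq_0: "degree_bound a 1 D \<Longrightarrow> newton_sum a D x = 0"
  unfolding newton_sum_def by (simp only: degree_bound_imp_tube_value_eq_0) simp

lemma elem_sym_eq_0_above:
  assumes "\<And>x. newton_sum a D x = 0" and "D < n"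
  shows "elem_sym a n = 0"
proof -
  have "(\<forall>x. newton_sum a (D + k) x = 0) \<and> elem_sym a (Suc (D + k)) = 0" for k
  proof (induction k)
    case 0
    then show ?case using assms(1) elem_sym_Suc[of D a] by (simp del: of_nat_Suc)
  next
    case (Suc k)
    then have "\<forall>x. newton_sum a (D + Suc k) x = 0" by (simp add: newton_sum_Suc)
    then show ?case using elem_sym_Suc[of "D + Suc k" a] by (simp del: of_nat_Suc)
  qed
  then show ?thesis using assms(2) by (metis less_imp_Suc_add add_Suc_right)
qed

section \<open>Generating functions\<close>

lemma fps_power_sums_ode:
  fixes a :: "nat \<Rightarrow> 'k::field_char_0"
  assumes a1: "a 1 = of_nat D"
  defines "R \<equiv> Abs_fps (\<lambda>k. (-1) ^ k * elem_sym a k)"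
  shows "Abs_fps (\<lambda>n. a (n + 1)) * R = of_nat D * R - fps_X * fps_deriv R"
proof (rule fps_ext)
  fix N
  have "(Abs_fps (\<lambda>n. a (n + 1)) * R) $ N = (R * Abs_fps (\<lambda>n. a (n + 1))) $ N"
    by (simp only: mult.commute)
  also have "\<dots> = (\<Sum>i\<le>N. (-1) ^ i * elem_sym a i * a (0 + N - i + 1))"
    unfolding fps_mult_nth atLeast0AtMost R_def by simp
  also have "\<dots> = (-1) ^ N * newton_sum a N 0"
    by (rule newton_sum_eq[symmetric])
  also have "\<dots> = (of_nat D * R - fps_X * fps_deriv R) $ N"
    unfolding newton_sum_at_0[of a D, OF a1] R_def
    by (cases N) (simp_all add: fps_X_mult_nth fps_of_nat[symmetric] algebra_simps)
  finally show "(Abs_fps (\<lambda>n. a (n + 1)) * R) $ N = (of_nat D * R - fps_X * fps_deriv R) $ N" .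
qed

lemma fps_of_poly_eq_prod_linear:
  fixes p :: "'a::alg_closed_field poly"
  assumes p0: "coeff p 0 = 1"
  obtains lam where "\<forall>i<degree p. lam i \<noteq> 0"
    "fps_of_poly p = (\<Prod>i<degree p. 1 - fps_const (lam i) * fps_X)"
proof -
  have "reflect_poly p \<noteq> 0" using p0 by auto
  then obtain A where A: "size A = degree (reflect_poly p)"
    "reflect_poly p = smult (lead_coeff (reflect_poly p)) (\<Prod>x\<in>#A. [:-x, 1:])"
    using alg_closed_imp_factorization by blast
  obtain xs where xs: "A = mset xs" by (metis ex_mset)
  have "lead_coeff (reflect_poly p) = coeff (reflect_poly (reflect_poly p)) 0"
    by simp
  also have "\<dots> = 1" using p0 by simp
  finally have refl: "reflect_poly p = prod_list (map (\<lambda>x. [:-x, 1:]) xs)"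
    using A(2) unfolding xs by (simp add: prod_mset_prod_list[symmetric])
  have "poly (prod_list (map (\<lambda>x. [:-x, 1:]) ys)) 0 = prod_list (map uminus ys)" for ys
    by (induction ys) simp_all
  moreover have "poly (reflect_poly p) 0 \<noteq> 0" using p0 by auto
  ultimately have "prod_list (map uminus xs) \<noteq> 0" unfolding refl by metis
  then have nz: "x \<noteq> 0" if "x \<in> set xs" for x
    using that by (auto simp: prod_list_zero_iff)
  have "p = reflect_poly (reflect_poly p)" using p0 by simp
  also have "\<dots> = prod_list (map (\<lambda>x. [:1, -x:]) xs)"
    unfolding refl reflect_poly_prod_list map_map using nz
    by (intro arg_cong[where f = prod_list] map_cong) (simp_all add: reflect_poly_pCons)
  finally have "p = prod_list (map (\<lambda>x. [:1, -x:]) xs)" .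
  moreover have linear: "fps_of_poly [:1, -x:] = 1 - fps_const x * fps_X" for x :: 'a
    by (simp add: fps_of_poly_linear')
  ultimately have "fps_of_poly p = (\<Prod>i<length xs. 1 - fps_const (xs ! i) * fps_X)"
    by (simp add: linear fps_of_poly_prod prod.list_conv_set_nth atLeast0LessThan)
  moreover have "degree p = length xs"
    using A(1) p0 unfolding xs by simp
  ultimately show ?thesis
    using that[of "(!) xs"] nz by (simp add: nth_mem)
qed
lemma fps_X_deriv_prod_linear:
  fixes lam :: "nat \<Rightarrow> 'a::field"
  shows "fps_X * fps_deriv (\<Prod>i<s. 1 - fps_const (lam i) * fps_X)
    = (\<Prod>i<s. 1 - fps_const (lam i) * fps_X) * (\<Sum>i<s. 1 - inverse (1 - fps_const (lam i) * fps_X))"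
proof (induction s)
  case (Suc s)
  define P where "P = (\<Prod>i<s. 1 - fps_const (lam i) * fps_X)"
  define Q where "Q = (\<Sum>i<s. 1 - inverse (1 - fps_const (lam i) * fps_X))"
  define B where "B = 1 - fps_const (lam s) * fps_X"
  have "B * inverse B = 1" unfolding B_def by (rule inverse_mult_eq_1') simp
  have "fps_X * fps_deriv (P * B) = P * B * Q + P * (fps_X * fps_deriv B)"
    using Suc.IH unfolding P_def[symmetric] Q_def[symmetric] by (simp add: algebra_simps)
  also have "fps_X * fps_deriv B = B - B * inverse B"
    unfolding \<open>B * inverse B = 1\<close> unfolding B_def by (simp add: algebra_simps)
  finally have "fps_X * fps_deriv (P * B) = P * B * (Q + (1 - inverse B))"
    by (simp add: algebra_simps)
  then show ?case unfolding P_def Q_def B_def by simp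
qed simp

lemma fps_const_inverse_div_linear:
  fixes c :: "'a::field"
  assumes "c \<noteq> 0"
  shows "fps_const (inverse c) / (1 - fps_const c * fps_X)
    = fps_X / (1 - fps_const c * fps_X) + fps_const (inverse c)"
proof -
  define B where "B = 1 - fps_const c * fps_X"
  have "B * inverse B = 1" unfolding B_def by (rule inverse_mult_eq_1') simp
  then have "fps_const (inverse c) * inverse B - fps_const (inverse c)
      = fps_const (inverse c) * (1 - B) * inverse B"
    by (simp add: algebra_simps)
  also have "\<dots> = (fps_const (inverse c) * fps_const c) * fps_X * inverse B"
    unfolding B_def by (simp add: algebra_simps)
  also have "fps_const (inverse c) * fps_const c = 1"
    using assms by (simp flip: fps_const_mult)
  finally show ?thesis unfolding B_def by (simp add: fps_divide_unit algebra_simps)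
qed

lemma fps_power_sums_eq:
  fixes a :: "nat \<Rightarrow> 'k::{alg_closed_field, field_char_0}"
  assumes a1: "a 1 = of_nat D" and bound: "degree_bound a 1 D"
  obtains s lam where "s \<le> D" "\<forall>i<s. lam i \<noteq> 0"
    "Abs_fps (\<lambda>n. a (n + 1)) = of_nat (D - s) + (\<Sum>i<s. inverse (1 - fps_const (lam i) * fps_X))"
proof -
  define R where "R = Abs_fps (\<lambda>k. (-1) ^ k * elem_sym a k)"
  define p where "p = truncate_fps (Suc D) R"
  have "elem_sym a k = 0" if "D < k" for k
    using elem_sym_eq_0_above[OF degree_bound_imp_newton_sum_eq_0[OF bound] that] .
  then have R: "R = fps_of_poly p"
    unfolding p_def fps_of_poly_truncate R_def by (intro fps_ext) (simp add: fps_cutoff_nth)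
  moreover have "coeff p 0 = 1" unfolding p_def R_def by (simp add: coeff_truncate_fps)
  ultimately obtain lam where lam: "\<forall>i<degree p. lam i \<noteq> 0"
    and prod: "R = (\<Prod>i<degree p. 1 - fps_const (lam i) * fps_X)"
    using fps_of_poly_eq_prod_linear by metis
  have "degree p \<le> D" unfolding p_def using degree_truncate_fps[of "Suc D" R] by simp
  define W where
    "W = of_nat (D - degree p) + (\<Sum>i<degree p. inverse (1 - fps_const (lam i) * fps_X))"
  have "Abs_fps (\<lambda>n. a (n + 1)) * R = W * R"
    unfolding fps_power_sums_ode[of a D, OF a1, folded R_def] W_def
    unfolding prod fps_X_deriv_prod_linear of_nat_diff[OF \<open>degree p \<le> D\<close>]
    by (simp add: algebra_simps sum_subtractf)
  moreover have "R \<noteq> 0"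
  proof
    assume "R = 0"
    then have "R $ 0 = 0" by simp
    then show False unfolding R_def by simp
  qed
  ultimately have "Abs_fps (\<lambda>n. a (n + 1)) = W" by simp
  with \<open>degree p \<le> D\<close> lam show ?thesis unfolding W_def using that by blast
qed

lemma fps_const_sum: "fps_const (\<Sum>x\<in>A. f x) = (\<Sum>x\<in>A. fps_const (f x))"
  by (induction A rule: infinite_finite_induct) (simp_all flip: fps_const_add)

lemma Z_alpha_eq: "Z_alpha a = fps_const (a 0) + fps_X * Abs_fps (\<lambda>n. a (n + 1))"
  unfolding Z_alpha_def by (rule fps_ext) (simp add: fps_X_mult_nth split: nat.split)

lemma Z_alpha_partial_fractions:
  fixes a :: "nat \<Rightarrow> 'k::field"
  assumes lam: "\<forall>i<s. lam i \<noteq> 0"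
    and S: "Abs_fps (\<lambda>n. a (n + 1)) = of_nat m + (\<Sum>i<s. inverse (1 - fps_const (lam i) * fps_X))"
  shows "Z_alpha a = fps_const (a 0) + of_nat m * fps_X
      + (\<Sum>i<s. fps_X / (1 - fps_const (lam i) * fps_X))" (is "_ = ?Z")
    and "Z_alpha a = fps_const (a 0 - (\<Sum>i<s. inverse (lam i))) + of_nat m * fps_X
      + (\<Sum>i<s. fps_const (inverse (lam i)) / (1 - fps_const (lam i) * fps_X))"
proof -
  have "fps_X / (1 - fps_const (lam i) * fps_X) = fps_X * inverse (1 - fps_const (lam i) * fps_X)"
    for i by (simp add: fps_divide_unit)
  then show Z: "Z_alpha a = ?Z"
    unfolding Z_alpha_eq S by (simp add: algebra_simps sum_distrib_left)
  have "(\<Sum>i<s. fps_const (inverse (lam i)) / (1 - fps_const (lam i) * fps_X))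
      = (\<Sum>i<s. fps_X / (1 - fps_const (lam i) * fps_X)) + fps_const (\<Sum>i<s. inverse (lam i))"
    using lam by (simp add: fps_const_inverse_div_linear sum.distrib fps_const_sum)
  with Z show "Z_alpha a = fps_const (a 0 - (\<Sum>i<s. inverse (lam i))) + of_nat m * fps_X
      + (\<Sum>i<s. fps_const (inverse (lam i)) / (1 - fps_const (lam i) * fps_X))"
    by (simp add: algebra_simps flip: fps_const_add)
qed

theorem mainTheorem11:
  fixes a :: "nat \<Rightarrow> 'k::{alg_closed_field, field_char_0}"
  assumes "pseudocharacter a"
  shows "\<exists>(m::nat) (s::nat) (ms::nat \<Rightarrow> nat) (lam::nat \<Rightarrow> 'k).
           (\<forall>i<s. ms i \<ge> 1 \<and> lam i \<noteq> 0) \<and>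
           Z_alpha a = fps_const (a 0) + of_nat m * fps_X
              + (\<Sum>i<s. fps_const (of_nat (ms i)) * fps_X / (1 - fps_const (lam i) * fps_X)) \<and>
           Z_alpha a = fps_const (a 0 - (\<Sum>i<s. of_nat (ms i) / lam i)) + of_nat m * fps_X
              + (\<Sum>i<s. fps_const (of_nat (ms i) / lam i) / (1 - fps_const (lam i) * fps_X)) \<and>
           cob_degree a 1 = m + (\<Sum>i<s. ms i) \<and>
           of_nat (cob_degree a 1) = a 1"
proof -
  define D where "D = cob_degree a 1"
  obtain s lam where "s \<le> D" and lam: "\<forall>i<s. lam i \<noteq> 0"
    and S: "Abs_fps (\<lambda>n. a (n + 1))
      = of_nat (D - s) + (\<Sum>i<s. inverse (1 - fps_const (lam i) * fps_X))"
    using fps_power_sums_eq cob_degree_circle[OF assms] unfolding D_def[symmetric] by metis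
  with cob_degree_circle(1)[OF assms] Z_alpha_partial_fractions[OF lam S] show ?thesis
    unfolding D_def[symmetric]
    by (intro exI[of _ "D - s"] exI[of _ s] exI[of _ "\<lambda>_. 1"] exI[of _ lam])
      (simp add: divide_inverse)
qed

end
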